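(* Let $S$ ($n\times n$, invertible), $U$ ($m\times n$), $V$ ($n\times m$) be complex matrices and $K$ an $n\times n$ matrix solving $S^{-1}K-KS=VU$. Then, with $\Xi=S^xe^{-t(S-S^{-1})}$ ($x\in\mathbb{Z}$, $t\in\mathbb{R}$), $$\mathcal{V}=-U\big(I+(\Xi K)^2\big)^{-1}\Xi V$$ (wherever the inverse exists) solves the $m\times m$ matrix semi-discrete modified KdV equation $\dot{\mathcal{V}}+\mathcal{V}^+(I+\mathcal{V}^2)-(I+\mathcal{V}^2)\mathcal{V}^-=0$.
   Context: $\mathcal{V}^\pm(x,t)=\mathcal{V}(x\pm1,t)$, $\dot{\mathcal{V}}=\partial_t\mathcal{V}$, $I=I_m$ in the equation and $I=I_n$ in the formula for $\mathcal{V}$. *)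

theory Defs
  imports "HOL-Analysis.Analysis"
begin

primrec mat_pow :: "'a::comm_ring_1 ^'n^'n \<Rightarrow> nat \<Rightarrow> 'a^'n^'n" where
  "mat_pow A 0 = mat 1"
| "mat_pow A (Suc k) = A ** mat_pow A k"

definition mat_zpow :: "'a::field ^'n^'n \<Rightarrow> int \<Rightarrow> 'a^'n^'n" where
  "mat_zpow A x = (if 0 \<le> x then mat_pow A (nat x) else mat_pow (matrix_inv A) (nat (- x)))"

definition mat_exp :: "complex^'n^'n \<Rightarrow> complex^'n^'n" where
  "mat_exp A = (\<Sum>k. (1 / fact k) *\<^sub>R mat_pow A k)"

definition Xi :: "complex^'n^'n \<Rightarrow> int \<Rightarrow> real \<Rightarrow> complex^'n^'n" where
  "Xi S x t = mat_zpow S x ** mat_exp ((- t) *\<^sub>R (S - matrix_inv S))"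

definition calV :: "complex^'n^'n \<Rightarrow> complex^'n^'m \<Rightarrow> complex^'m^'n \<Rightarrow> complex^'n^'n
    \<Rightarrow> int \<Rightarrow> real \<Rightarrow> complex^'m^'m" where
  "calV S U V K x t = - (U ** matrix_inv (mat 1 + (Xi S x t ** K) ** (Xi S x t ** K)) ** Xi S x t ** V)"

end

theory Submission
  imports Defs
begin

text \<open>
  Write \<open>X = Xi S x t\<close>, \<open>M = X K\<close>, \<open>P = X V\<close>, \<open>G = (I + M\<^sup>2)\<inverse>\<close>
  and \<open>T = S - S\<inverse>\<close>.  Since \<open>X\<close> commutes with \<open>S\<close> and \<open>S\<inverse>\<close>, the equation
  \<open>S\<inverse>K - KS = VU\<close> becomes \<open>S\<inverse>M - MS = PU\<close>, and the lattice shifts act by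
  \<open>Xi S (x \<plusminus> 1) t = S\<^sup>\<plusminus>\<^sup>1 X\<close>.  Differentiating \<open>calV = -U G P\<close> with
  \<open>\<partial>\<^sub>t X = -T X\<close> and \<open>\<partial>(A\<inverse>) = -A\<inverse> (\<partial>A) A\<inverse>\<close> gives
  \<open>\<partial>\<^sub>t calV = U G T P - U G (M T M + T M M) G P\<close>.  The theorem thus reduces to
  a purely algebraic identity in a matrix ring, proved by factorising
  \<open>I + calV\<^sup>2 = (I - U M G S P)(I + U S\<inverse> M G P)\<close> and expressing the shifted
  resolvents through \<open>G\<close>.
\<close>

lemma matrix_add_rdistrib: "(A + B) ** C = A ** C + B ** (C::'a::semiring_1^'p^'n)"
  by (simp add: vec_eq_iff matrix_matrix_mult_def sum.distrib algebra_simps)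

lemma matrix_diff_ldistrib: "C ** (A - B) = C ** A - C ** (B::'a::ring_1^'p^'n)"
  by (simp add: vec_eq_iff matrix_matrix_mult_def sum_subtractf algebra_simps)

lemma matrix_diff_rdistrib: "(A - B) ** C = A ** C - B ** (C::'a::ring_1^'p^'n)"
  by (simp add: vec_eq_iff matrix_matrix_mult_def sum_subtractf algebra_simps)

lemma matrix_neg_left: "(- A) ** C = - (A ** (C::'a::ring_1^'p^'n))"
  by (simp add: vec_eq_iff matrix_matrix_mult_def sum_negf)

lemma matrix_neg_right: "C ** (- A) = - (C ** (A::'a::ring_1^'p^'n))"
  by (simp add: vec_eq_iff matrix_matrix_mult_def sum_negf)

text \<open>
  Normal form for matrix-ring expressions: products associated to the left, sums multiplied
  out.
\<close>

lemmas matrix_ring_simps = matrix_mul_assoc matrix_add_ldistrib matrix_add_rdistrib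
  matrix_diff_ldistrib matrix_diff_rdistrib matrix_neg_left matrix_neg_right

text \<open>
  Rewrite a product \<open>A B\<close> (or \<open>A B C\<close>) occurring at the end of a
  left-associated product; this lets equations be used as rewrite rules on the normal form.
\<close>

lemma matrix_mul_rewrite_tail2: "A ** B = D \<Longrightarrow> Z ** A ** B = Z ** D"
  by (metis matrix_mul_assoc)

lemma matrix_mul_rewrite_tail3: "A ** B ** C = D \<Longrightarrow> Z ** A ** B ** C = Z ** D"
  by (metis matrix_mul_assoc)

lemma bounded_bilinear_matrix_mult:
  "bounded_bilinear ((**) :: 'a::{real_normed_algebra_1,euclidean_space}^'n^'m \<Rightarrow> 'a^'p^'n \<Rightarrow> 'a^'p^'m)"
proof -
  have "bilinear ((**) :: 'a^'n^'m \<Rightarrow> 'a^'p^'n \<Rightarrow> 'a^'p^'m)"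
    unfolding bilinear_def
    by (auto intro!: linearI simp: matrix_add_ldistrib matrix_add_rdistrib scalar_matrix_assoc matrix_scalar_ac)
  then show ?thesis using bilinear_conv_bounded_bilinear by blast
qed

lemma matrix_inv_left_right:
  assumes "invertible (A::'a::semiring_1^'n^'m)"
  shows "A ** matrix_inv A = mat 1" "matrix_inv A ** A = mat 1"
  using someI_ex[OF assms[unfolded invertible_def]] unfolding matrix_inv_def by auto

lemma matrix_inv_difference:
  fixes A B :: "'a::field^'n^'n"
  assumes "invertible A" "invertible B"
  shows "matrix_inv A - matrix_inv B = - (matrix_inv A ** (A - B) ** matrix_inv B)"
  using matrix_inv_left_right[OF assms(1)] matrix_inv_left_right[OF assms(2)]
  by (simp add: matrix_diff_ldistrib matrix_diff_rdistrib flip: matrix_mul_assoc)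

lemma inverse_commute:
  fixes A G M :: "'a::comm_ring_1^'n^'n"
  assumes "G ** A = mat 1" "A ** G = mat 1" "M ** A = A ** M"
  shows "M ** G = G ** M"
proof -
  have "G ** M = G ** M ** (A ** G)" by (simp add: assms(2))
  also have "\<dots> = G ** (M ** A) ** G" by (simp add: matrix_mul_assoc)
  also have "\<dots> = (G ** A) ** M ** G" by (simp add: assms(3) matrix_mul_assoc)
  also have "\<dots> = M ** G" by (simp add: assms(1))
  finally show ?thesis by simp
qed

lemma has_vector_derivative_iff_quotient:
  fixes f :: "real \<Rightarrow> 'a::real_normed_vector"
  shows "(f has_vector_derivative D) (at x within S) \<longleftrightarrow>
         ((\<lambda>y. (1 / (y - x)) *\<^sub>R (f y - f x)) \<longlongrightarrow> D) (at x within S)"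
proof -
  have "norm (f y - f x - (y - x) *\<^sub>R D) / norm (y - x) = norm ((1 / (y - x)) *\<^sub>R (f y - f x) - D)"
    if "y \<noteq> x" for y
  proof -
    have "(1 / (y - x)) *\<^sub>R (f y - f x) - D = (1 / (y - x)) *\<^sub>R (f y - f x - (y - x) *\<^sub>R D)"
      using that by (simp add: scaleR_diff_right)
    then show ?thesis by (simp add: divide_inverse mult.commute)
  qed
  then have "((\<lambda>y. norm (f y - f x - (y - x) *\<^sub>R D) / norm (y - x)) \<longlongrightarrow> 0) (at x within S) \<longleftrightarrow>
      ((\<lambda>y. norm ((1 / (y - x)) *\<^sub>R (f y - f x) - D)) \<longlongrightarrow> 0) (at x within S)"
    by (intro Lim_cong_within) auto
  then show ?thesis
    by (simp add: has_vector_derivative_def has_derivative_iff_norm bounded_linear_scaleR_left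
        tendsto_norm_zero_iff LIM_zero_iff)
qed

lemma has_vector_derivative_series:
  fixes f f' :: "nat \<Rightarrow> real \<Rightarrow> 'a::banach"
  assumes "convex S"
    and "\<And>n x. x \<in> S \<Longrightarrow> (f n has_vector_derivative f' n x) (at x within S)"
    and "uniform_limit S (\<lambda>n x. \<Sum>i<n. f' i x) g' sequentially"
    and "x0 \<in> S" and "summable (\<lambda>n. f n x0)"
  shows "\<exists>g. \<forall>x\<in>S. (\<lambda>n. f n x) sums g x \<and> (g has_vector_derivative g' x) (at x within S)"
  unfolding has_vector_derivative_def
proof (rule has_derivative_series[OF assms(1) _ _ assms(4)])
  fix e :: real assume "e > 0"
  then obtain N where N: "\<And>n x. n \<ge> N \<Longrightarrow> x \<in> S \<Longrightarrow> norm ((\<Sum>i<n. f' i x) - g' x) < e"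
    using assms(3) unfolding uniform_limit_iff eventually_sequentially dist_norm by blast
  have "norm ((\<Sum>i<n. h *\<^sub>R f' i x) - h *\<^sub>R g' x) \<le> e * norm h"
    if "n \<ge> N" "x \<in> S" for n x h
  proof -
    have "norm ((\<Sum>i<n. h *\<^sub>R f' i x) - h *\<^sub>R g' x) = \<bar>h\<bar> * norm ((\<Sum>i<n. f' i x) - g' x)"
      by (simp flip: scaleR_sum_right scaleR_diff_right)
    also have "\<dots> \<le> \<bar>h\<bar> * e" using N[OF that] by (intro mult_left_mono) auto
    finally show ?thesis by (simp add: mult.commute)
  qed
  then show "\<forall>\<^sub>F n in sequentially. \<forall>x\<in>S. \<forall>h. norm ((\<Sum>i<n. h *\<^sub>R f' i x) - h *\<^sub>R g' x) \<le> e * norm h"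
    unfolding eventually_sequentially by blast
qed (use assms in \<open>auto simp: has_vector_derivative_def summable_sums\<close>)

lemma mat_pow_commute:
  assumes "C ** B = B ** C"
  shows "C ** mat_pow B k = mat_pow B k ** (C::'a::comm_ring_1^'n^'n)"
proof (induction k)
  case (Suc k)
  have "C ** mat_pow B (Suc k) = (C ** B) ** mat_pow B k" by (simp add: matrix_mul_assoc)
  also have "\<dots> = B ** (C ** mat_pow B k)" by (simp only: assms matrix_mul_assoc)
  also have "\<dots> = mat_pow B (Suc k) ** C" by (simp only: Suc matrix_mul_assoc mat_pow.simps)
  finally show ?case .
qed simp

lemma mat_pow_scaleR: "mat_pow (r *\<^sub>R B) k = (r ^ k) *\<^sub>R mat_pow (B::'a::{comm_ring_1,real_algebra_1}^'n^'n) k"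
  by (induction k) (simp_all add: matrix_scalar_ac flip: scalar_matrix_assoc)

lemma mat_pow_norm_le:
  fixes B :: "'a::{comm_ring_1,real_normed_algebra_1,euclidean_space}^'n^'n"
  assumes K: "\<And>X Y. norm ((X::'a^'n^'n) ** (Y::'a^'n^'n)) \<le> norm X * norm Y * K" and "K \<ge> 0"
  shows "norm (mat_pow B k) \<le> norm (mat 1 :: 'a^'n^'n) * (K * norm B) ^ k"
proof (induction k)
  case (Suc k)
  have "norm (mat_pow B (Suc k)) \<le> norm B * norm (mat_pow B k) * K" using K by simp
  also have "\<dots> \<le> norm B * (norm (mat 1 :: 'a^'n^'n) * (K * norm B) ^ k) * K"
    by (intro mult_right_mono mult_left_mono Suc \<open>K \<ge> 0\<close>) auto
  also have "\<dots> = norm (mat 1 :: 'a^'n^'n) * (K * norm B) ^ Suc k" by (simp add: algebra_simps)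
  finally show ?case .
qed simp

definition exp_term :: "complex^'n^'n \<Rightarrow> real \<Rightarrow> nat \<Rightarrow> complex^'n^'n" where
  "exp_term B s k = (s ^ k / fact k) *\<^sub>R mat_pow B k"

lemma mat_exp_scaleR_suminf: "mat_exp (s *\<^sub>R B) = (\<Sum>k. exp_term B s k)"
  unfolding mat_exp_def exp_term_def mat_pow_scaleR by (simp add: divide_inverse_commute)

text \<open>
  The exponential series of \<open>s B\<close> converges uniformly for \<open>s\<close> in
  bounded sets (Weierstrass M-test against the scalar exponential series).
\<close>

lemma exp_term_uniform_limit:
  fixes B :: "complex^'n^'n"
  shows "uniform_limit (cball 0 r) (\<lambda>n s. \<Sum>k<n. exp_term B s k) (\<lambda>s. mat_exp (s *\<^sub>R B)) sequentially"
proof -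
  obtain K where K: "\<And>X Y. norm ((X::complex^'n^'n) ** (Y::complex^'n^'n)) \<le> norm X * norm Y * K" "K \<ge> 0"
    using bounded_bilinear.nonneg_bounded[OF bounded_bilinear_matrix_mult] by blast
  define c where "c = norm (mat 1 :: complex^'n^'n)"
  have bound: "norm (exp_term B s k) \<le> c * (r * (K * norm B)) ^ k / fact k" if "s \<in> cball 0 r" for s k
  proof -
    have "norm (exp_term B s k) = \<bar>s\<bar> ^ k / fact k * norm (mat_pow B k)"
      by (simp add: exp_term_def power_abs)
    also have "\<dots> \<le> r ^ k / fact k * (c * (K * norm B) ^ k)"
      using that mat_pow_norm_le[OF K, of B k] unfolding c_def
      by (intro mult_mono divide_right_mono power_mono) auto
    finally show ?thesis by (simp add: power_mult_distrib ac_simps)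
  qed
  have "summable (\<lambda>k. c * ((r * (K * norm B)) ^ k /\<^sub>R fact k))"
    by (intro summable_mult summable_exp_generic)
  then have "summable (\<lambda>k. c * (r * (K * norm B)) ^ k / fact k)"
    by (simp add: divide_inverse ac_simps)
  from Weierstrass_m_test[OF bound this] show ?thesis
    by (simp only: mat_exp_scaleR_suminf)
qed

lemma exp_term_sums: "(\<lambda>k. exp_term B s k) sums mat_exp (s *\<^sub>R B)"
  using tendsto_uniform_limitI[OF exp_term_uniform_limit, of s "\<bar>s\<bar>"]
  by (simp add: sums_def)

lemma exp_term_Suc_has_vector_derivative:
  "((\<lambda>s. exp_term B s (Suc k)) has_vector_derivative B ** exp_term B s k) (at s within S)"
proof -
  have "((\<lambda>s. s ^ Suc k / fact (Suc k)) has_real_derivative real (Suc k) * s ^ k / fact (Suc k))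
      (at s within S)"
    using DERIV_cdivide[OF DERIV_pow[of "Suc k" s S], of "fact (Suc k)"] by simp
  moreover have "real (Suc k) * s ^ k / fact (Suc k) = s ^ k / fact k"
    by (simp del: of_nat_Suc)
  ultimately have "((\<lambda>s. s ^ Suc k / fact (Suc k)) has_real_derivative s ^ k / fact k) (at s within S)"
    by simp
  from has_vector_derivative_scaleR[OF this has_vector_derivative_const[of "mat_pow B (Suc k)"]]
  show ?thesis
    unfolding exp_term_def by (simp add: matrix_scalar_ac flip: scalar_matrix_assoc)
qed

text \<open>
  \<open>\<partial>\<^sub>s exp(s B) = B exp(s B)\<close>: differentiate the series without
  its constant term on a ball around \<open>t\<close>.
\<close>

lemma mat_exp_has_vector_derivative:
  fixes B :: "complex^'n^'n"
  shows "((\<lambda>s. mat_exp (s *\<^sub>R B)) has_vector_derivative B ** mat_exp (t *\<^sub>R B)) (at t)"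
proof -
  define S where "S = ball (0::real) (\<bar>t\<bar> + 1)"
  have S: "convex S" "open S" "t \<in> S" by (auto simp: S_def)
  have "uniform_limit S (\<lambda>n s. \<Sum>k<n. exp_term B s k) (\<lambda>s. mat_exp (s *\<^sub>R B)) sequentially"
    using uniform_limit_on_subset[OF exp_term_uniform_limit ball_subset_cball] unfolding S_def .
  then have "uniform_limit S (\<lambda>n s. B ** (\<Sum>k<n. exp_term B s k)) (\<lambda>s. B ** mat_exp (s *\<^sub>R B)) sequentially"
    by (rule bounded_linear.uniform_limit[OF bounded_bilinear.bounded_linear_right[OF bounded_bilinear_matrix_mult]])
  then have ulim: "uniform_limit S (\<lambda>n s. \<Sum>k<n. B ** exp_term B s k) (\<lambda>s. B ** mat_exp (s *\<^sub>R B))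
      sequentially"
    unfolding bounded_bilinear.sum_right[OF bounded_bilinear_matrix_mult] .
  have summ: "summable (\<lambda>k. exp_term B t (Suc k))"
    using summable_Suc_iff sums_summable[OF exp_term_sums] by blast
  obtain g where g: "\<forall>s\<in>S. (\<lambda>k. exp_term B s (Suc k)) sums g s \<and>
      (g has_vector_derivative B ** mat_exp (s *\<^sub>R B)) (at s within S)"
    using has_vector_derivative_series[of S "\<lambda>k s. exp_term B s (Suc k)" "\<lambda>k s. B ** exp_term B s k",
        OF S(1) exp_term_Suc_has_vector_derivative ulim S(3) summ] by blast
  have g_eq: "g s = mat_exp (s *\<^sub>R B) - mat 1" if "s \<in> S" for s
  proof -
    have "(\<lambda>k. exp_term B s (Suc k)) sums g s" using g that by blast
    moreover have "(\<lambda>k. exp_term B s (Suc k)) sums (mat_exp (s *\<^sub>R B) - exp_term B s 0)"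
      using exp_term_sums[of B s] sums_Suc_iff[of "exp_term B s"] by simp
    ultimately have "g s = mat_exp (s *\<^sub>R B) - exp_term B s 0" by (rule sums_unique2)
    then show ?thesis by (simp add: exp_term_def)
  qed
  have "(g has_vector_derivative B ** mat_exp (t *\<^sub>R B)) (at t)"
    using g S(3) at_within_open[OF S(3,2)] by auto
  then have "((\<lambda>s. mat_exp (s *\<^sub>R B) - mat 1) has_vector_derivative B ** mat_exp (t *\<^sub>R B)) (at t)"
    by (rule has_vector_derivative_transform_within_open[OF _ S(2,3) g_eq])
  then show ?thesis
    unfolding diff_conv_add_uminus has_vector_derivative_add_const .
qed

lemma mat_exp_commute:
  fixes B C :: "complex^'n^'n"
  assumes "C ** B = B ** C"
  shows "C ** mat_exp (s *\<^sub>R B) = mat_exp (s *\<^sub>R B) ** C"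
proof -
  note mult = bounded_bilinear_matrix_mult
  have "(\<lambda>k. C ** exp_term B s k) sums (C ** mat_exp (s *\<^sub>R B))"
    by (rule bounded_linear.sums[OF bounded_bilinear.bounded_linear_right[OF mult] exp_term_sums])
  moreover have "(\<lambda>k. exp_term B s k ** C) sums (mat_exp (s *\<^sub>R B) ** C)"
    by (rule bounded_linear.sums[OF bounded_bilinear.bounded_linear_left[OF mult] exp_term_sums])
  moreover have "C ** exp_term B s k = exp_term B s k ** C" for k
    using mat_pow_commute[OF assms]
    by (simp add: exp_term_def matrix_scalar_ac flip: scalar_matrix_assoc)
  ultimately show ?thesis using sums_unique2 by simp
qed

text \<open>
  Continuity of the inverse: by Cramer's rule each entry of the inverse is a quotient of
  determinants, which depend continuously on the matrix.
\<close>

lemma tendsto_det: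
  fixes f :: "'b \<Rightarrow> 'a::real_normed_field^'n^'n"
  assumes "(f \<longlongrightarrow> A) F"
  shows "((\<lambda>s. det (f s)) \<longlongrightarrow> det A) F"
  unfolding det_def by (intro tendsto_intros assms)

definition column_replaced :: "'a^'n^'n \<Rightarrow> 'n \<Rightarrow> 'a^'n \<Rightarrow> 'a^'n^'n" where
  "column_replaced A k b = (\<chi> i l. if l = k then b $ i else A $ i $ l)"

lemma matrix_inv_cramer:
  fixes A :: "'a::field^'n^'n"
  assumes "det A \<noteq> 0"
  shows "matrix_inv A $ k $ j = det (column_replaced A k (axis j 1)) / det A"
proof -
  have "A *v (matrix_inv A *v axis j 1) = axis j 1"
    using assms invertible_det_nz matrix_inv_left_right(1)
    by (metis matrix_vector_mul_assoc matrix_vector_mul_lid)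
  then have "(matrix_inv A *v axis j 1) $ k = det (column_replaced A k (axis j 1)) / det A"
    using cramer[OF assms] by (simp add: column_replaced_def)
  moreover have "(matrix_inv A *v axis j 1) $ k = matrix_inv A $ k $ j"
    by (simp add: matrix_vector_mult_def axis_def if_distrib cong: if_cong)
  ultimately show ?thesis by simp
qed

lemma tendsto_matrix_inv:
  fixes f :: "'b \<Rightarrow> 'a::real_normed_field^'n^'n"
  assumes f: "(f \<longlongrightarrow> A) F" and "invertible A"
  shows "((\<lambda>s. matrix_inv (f s)) \<longlongrightarrow> matrix_inv A) F"
proof (rule vec_tendstoI, rule vec_tendstoI)
  fix k j
  have detA: "det A \<noteq> 0" using \<open>invertible A\<close> invertible_det_nz by blast
  have "((\<lambda>s. column_replaced (f s) k (axis j 1)) \<longlongrightarrow> column_replaced A k (axis j 1)) F"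
    unfolding column_replaced_def
    by (intro vec_tendstoI) (auto intro: tendsto_vec_nth[OF tendsto_vec_nth[OF f]])
  then have "((\<lambda>s. det (column_replaced (f s) k (axis j 1)) / det (f s)) \<longlongrightarrow> matrix_inv A $ k $ j) F"
    unfolding matrix_inv_cramer[OF detA] by (intro tendsto_divide tendsto_det f detA)
  moreover have "\<forall>\<^sub>F s in F. det (column_replaced (f s) k (axis j 1)) / det (f s) = matrix_inv (f s) $ k $ j"
    using tendsto_imp_eventually_ne[OF tendsto_det[OF f] detA]
    by eventually_elim (rule matrix_inv_cramer[symmetric])
  ultimately show "((\<lambda>s. matrix_inv (f s) $ k $ j) \<longlongrightarrow> matrix_inv A $ k $ j) F"
    by (rule Lim_transform_eventually)
qed

text \<open>
  Derivative of the inverse: \<open>\<partial>(A\<inverse>) = -A\<inverse> (\<partial>A)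
  A\<inverse>\<close>, from the difference formula for inverses and continuity of the inverse.
\<close>

lemma matrix_inv_has_vector_derivative:
  fixes A :: "real \<Rightarrow> 'a::{real_normed_field,euclidean_space}^'n^'n"
  assumes A: "(A has_vector_derivative A') (at t)" and inv: "invertible (A t)"
  shows "((\<lambda>s. matrix_inv (A s)) has_vector_derivative
           - (matrix_inv (A t) ** A' ** matrix_inv (A t))) (at t)"
proof -
  interpret mult: bounded_bilinear "(**) :: 'a^'n^'n \<Rightarrow> 'a^'n^'n \<Rightarrow> 'a^'n^'n"
    by (rule bounded_bilinear_matrix_mult)
  define G where "G s = matrix_inv (A s)" for s
  have "(A \<longlongrightarrow> A t) (at t)"
    using has_vector_derivative_continuous[OF A] by (simp add: continuous_at)
  then have G_cont: "(G \<longlongrightarrow> G t) (at t)" and near_inv: "\<forall>\<^sub>F s in at t. det (A s) \<noteq> 0"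
    using tendsto_matrix_inv[OF _ inv] tendsto_imp_eventually_ne[OF tendsto_det] inv invertible_det_nz
    unfolding G_def by blast+
  from near_inv have quotient_eq: "\<forall>\<^sub>F s in at t. - (G s ** ((1 / (s - t)) *\<^sub>R (A s - A t)) ** G t) =
      (1 / (s - t)) *\<^sub>R (G s - G t)"
  proof eventually_elim
    case (elim s)
    then have "G s - G t = - (G s ** (A s - A t) ** G t)"
      unfolding G_def by (intro matrix_inv_difference inv) (simp add: invertible_det_nz)
    then show ?case by (simp add: mult.scaleR_left mult.scaleR_right)
  qed
  have "((\<lambda>s. - (G s ** ((1 / (s - t)) *\<^sub>R (A s - A t)) ** G t)) \<longlongrightarrow> - (G t ** A' ** G t)) (at t)"
    using A unfolding has_vector_derivative_iff_quotient
    by (intro tendsto_minus mult.tendsto G_cont tendsto_const)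
  from this quotient_eq have "((\<lambda>s. (1 / (s - t)) *\<^sub>R (G s - G t)) \<longlongrightarrow> - (G t ** A' ** G t)) (at t)"
    by (rule Lim_transform_eventually)
  then show ?thesis unfolding has_vector_derivative_iff_quotient G_def .
qed

lemma resolvent_has_vector_derivative:
  fixes X :: "real \<Rightarrow> 'a::{real_normed_field,euclidean_space}^'n^'n"
    and K :: "'a^'n^'n" and U :: "'a^'n^'m" and V :: "'a^'m^'n"
  assumes X: "(X has_vector_derivative D) (at t)"
    and inv: "invertible (mat 1 + (X t ** K) ** (X t ** K))"
  defines "G \<equiv> matrix_inv (mat 1 + (X t ** K) ** (X t ** K))" and "M \<equiv> X t ** K"
  shows "((\<lambda>s. U ** matrix_inv (mat 1 + (X s ** K) ** (X s ** K)) ** X s ** V) has_vector_derivative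
           U ** G ** D ** V - U ** G ** (M ** (D ** K) + (D ** K) ** M) ** G ** X t ** V) (at t)"
proof -
  note mult = bounded_bilinear_matrix_mult
  have XK: "((\<lambda>s. X s ** K) has_vector_derivative D ** K) (at t)"
    by (rule bounded_linear.has_vector_derivative[OF bounded_bilinear.bounded_linear_left[OF mult] X])
  have "((\<lambda>s. mat 1 + (X s ** K) ** (X s ** K)) has_vector_derivative M ** (D ** K) + (D ** K) ** M) (at t)"
    unfolding M_def
    using has_vector_derivative_add[OF has_vector_derivative_const bounded_bilinear.has_vector_derivative[OF mult XK XK]]
    by simp
  from matrix_inv_has_vector_derivative[OF this inv]
  have "((\<lambda>s. matrix_inv (mat 1 + (X s ** K) ** (X s ** K))) has_vector_derivative
      - (G ** (M ** (D ** K) + (D ** K) ** M) ** G)) (at t)"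
    unfolding G_def M_def .
  then have "((\<lambda>s. U ** matrix_inv (mat 1 + (X s ** K) ** (X s ** K))) has_vector_derivative
      U ** - (G ** (M ** (D ** K) + (D ** K) ** M) ** G)) (at t)"
    by (rule bounded_linear.has_vector_derivative[OF bounded_bilinear.bounded_linear_right[OF mult]])
  from bounded_bilinear.has_vector_derivative[OF mult this X]
  have "((\<lambda>s. U ** matrix_inv (mat 1 + (X s ** K) ** (X s ** K)) ** X s) has_vector_derivative
      U ** G ** D - U ** G ** (M ** (D ** K) + (D ** K) ** M) ** G ** X t) (at t)"
    unfolding G_def by (simp add: matrix_neg_left matrix_neg_right matrix_mul_assoc)
  from bounded_linear.has_vector_derivative[OF bounded_bilinear.bounded_linear_left[OF mult] this]
  show ?thesis by (simp add: matrix_diff_rdistrib)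
qed

lemma mat_zpow_succ:
  assumes "invertible (S::'a::field^'n^'n)"
  shows "mat_zpow S (y + 1) = S ** mat_zpow S y"
proof (cases "0 \<le> y")
  case True
  then have "nat (y + 1) = Suc (nat y)" by simp
  then show ?thesis using True by (simp add: mat_zpow_def)
next
  case False
  define k where "k = nat (- y) - 1"
  have k: "nat (- y) = Suc k" "nat (- (y + 1)) = k"
    using False by (simp_all add: k_def nat_diff_distrib')
  have "mat_zpow S y = matrix_inv S ** mat_pow (matrix_inv S) k"
    using False k by (simp add: mat_zpow_def)
  moreover have "mat_zpow S (y + 1) = mat_pow (matrix_inv S) k"
    using False k by (cases "y = -1") (auto simp: mat_zpow_def)
  ultimately show ?thesis
    by (simp add: matrix_mul_assoc matrix_inv_left_right(1)[OF assms])
qed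

lemma mat_zpow_pred:
  assumes "invertible (S::'a::field^'n^'n)"
  shows "mat_zpow S (y - 1) = matrix_inv S ** mat_zpow S y"
  using mat_zpow_succ[OF assms, of "y - 1"]
  by (simp add: matrix_mul_assoc matrix_inv_left_right(2)[OF assms])

lemma mat_zpow_commute:
  assumes "C ** S = S ** C" "C ** matrix_inv S = matrix_inv S ** C"
  shows "C ** mat_zpow S y = mat_zpow S y ** (C::'a::field^'n^'n)"
  unfolding mat_zpow_def using assms by (simp add: mat_pow_commute)

lemma Xi_commute:
  assumes "C ** S = S ** C" "C ** matrix_inv S = matrix_inv S ** C"
  shows "C ** Xi S x t = Xi S x t ** C"
proof -
  have "C ** (S - matrix_inv S) = (S - matrix_inv S) ** C"
    using assms by (simp add: matrix_ring_simps)
  then have "C ** mat_exp ((- t) *\<^sub>R (S - matrix_inv S)) = mat_exp ((- t) *\<^sub>R (S - matrix_inv S)) ** C"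
    by (rule mat_exp_commute)
  then show ?thesis
    unfolding Xi_def using mat_zpow_commute[OF assms] by (metis matrix_mul_assoc)
qed

lemma Xi_succ: "invertible S \<Longrightarrow> Xi S (x + 1) t = S ** Xi S x t"
  by (simp add: Xi_def mat_zpow_succ matrix_mul_assoc)

lemma Xi_pred: "invertible S \<Longrightarrow> Xi S (x - 1) t = matrix_inv S ** Xi S x t"
  by (simp add: Xi_def mat_zpow_pred matrix_mul_assoc)

lemma Xi_has_vector_derivative:
  assumes "invertible S"
  shows "((\<lambda>s. Xi S x s) has_vector_derivative - ((S - matrix_inv S) ** Xi S x t)) (at t)"
proof -
  define T where "T = S - matrix_inv S"
  have "T ** mat_zpow S x = mat_zpow S x ** T"
    unfolding T_def
    by (intro mat_zpow_commute) (simp_all add: matrix_ring_simps matrix_inv_left_right[OF assms])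
  moreover have "((\<lambda>s. mat_zpow S x ** mat_exp (s *\<^sub>R (- T))) has_vector_derivative
      mat_zpow S x ** ((- T) ** mat_exp (t *\<^sub>R (- T)))) (at t)"
    by (rule bounded_linear.has_vector_derivative[OF
          bounded_bilinear.bounded_linear_right[OF bounded_bilinear_matrix_mult] mat_exp_has_vector_derivative])
  ultimately show ?thesis
    unfolding Xi_def T_def[symmetric] by (simp add: matrix_neg_left matrix_neg_right matrix_mul_assoc)
qed

lemma Xi_shifted_sylvester:
  assumes "invertible S" and "matrix_inv S ** K - K ** S = V ** U"
  shows "matrix_inv S ** (Xi S x t ** K) - (Xi S x t ** K) ** S = (Xi S x t ** V) ** U"
proof -
  have "matrix_inv S ** Xi S x t = Xi S x t ** matrix_inv S"
    by (rule Xi_commute) (simp_all add: matrix_inv_left_right[OF assms(1)])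
  then have "matrix_inv S ** (Xi S x t ** K) - (Xi S x t ** K) ** S =
      Xi S x t ** (matrix_inv S ** K - K ** S)"
    by (simp add: matrix_ring_simps)
  then show ?thesis using assms(2) by (simp add: matrix_mul_assoc)
qed

lemma calV_has_vector_derivative:
  fixes S K :: "complex^'n^'n" and U :: "complex^'n^'m" and V :: "complex^'m^'n"
  assumes "invertible S" and "invertible (mat 1 + (Xi S x t ** K) ** (Xi S x t ** K))"
  defines "T \<equiv> S - matrix_inv S" and "M \<equiv> Xi S x t ** K" and "P \<equiv> Xi S x t ** V"
    and "G \<equiv> matrix_inv (mat 1 + (Xi S x t ** K) ** (Xi S x t ** K))"
  shows "((\<lambda>s. calV S U V K x s) has_vector_derivative
           U ** G ** T ** P - U ** G ** (M ** T ** M + T ** M ** M) ** G ** P) (at t)"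
proof -
  have "((\<lambda>s. calV S U V K x s) has_vector_derivative
      - (U ** G ** (- (T ** Xi S x t)) ** V
         - U ** G ** (M ** (- (T ** Xi S x t) ** K) + (- (T ** Xi S x t) ** K) ** M) ** G ** Xi S x t ** V))
      (at t)"
    unfolding calV_def G_def M_def T_def
    by (intro has_vector_derivative_minus resolvent_has_vector_derivative Xi_has_vector_derivative assms)
  then show ?thesis
    by (simp add: M_def P_def matrix_ring_simps algebra_simps)
qed

text \<open>
  Given
  \<open>S\<close> with inverse \<open>Si\<close>, a matrix \<open>M\<close> with \<open>Si M
  - M S = P U\<close>, the inverse \<open>G\<close> of \<open>I + M\<^sup>2\<close>, a left
  inverse \<open>Gp\<close> of \<open>I + (S M)\<^sup>2\<close> and a right inverse
  \<open>Gm\<close> of \<open>I + (Si M)\<^sup>2\<close>, the expression \<open>U G (S - Si) P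
  - U G (M (S - Si) M + (S - Si) M M) G P\<close> (the time derivative of \<open>calV\<close>
  computed above) equals \<open>v\<^sup>+ (I + v\<^sup>2) - (I + v\<^sup>2) v\<^sup>-\<close>
  with \<open>v = -U G P\<close>, \<open>v\<^sup>+ = -U Gp S P\<close>, \<open>v\<^sup>- = -U
  Gm Si P\<close>.
\<close>

context
  fixes S Si M G Gp Gm :: "'a::comm_ring_1^'n^'n" and P :: "'a^'m^'n" and U :: "'a^'n^'m"
  assumes S_Si: "S ** Si = mat 1" and Si_S: "Si ** S = mat 1"
    and shifted_sylvester: "Si ** M - M ** S = P ** U"
    and G_left: "G ** (mat 1 + M ** M) = mat 1" and G_right: "(mat 1 + M ** M) ** G = mat 1"
    and Gp_left: "Gp ** (mat 1 + (S ** M) ** (S ** M)) = mat 1"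
    and Gm_right: "(mat 1 + (Si ** M) ** (Si ** M)) ** Gm = mat 1"
begin

lemma G_M_commute: "M ** G = G ** M"
  by (rule inverse_commute[OF G_left G_right]) (simp add: matrix_ring_simps)

lemma G_M_M: "G ** M ** M = mat 1 - G"
  using G_left by (simp add: matrix_ring_simps algebra_simps)

lemmas relations = S_Si Si_S matrix_mul_rewrite_tail2[OF S_Si] matrix_mul_rewrite_tail2[OF Si_S]
  shifted_sylvester[symmetric] matrix_mul_rewrite_tail2[OF shifted_sylvester[symmetric]]
  G_M_commute matrix_mul_rewrite_tail2[OF G_M_commute] G_M_M matrix_mul_rewrite_tail3[OF G_M_M]

text \<open>\<open>I + (U G P)\<^sup>2\<close> factorises, using \<open>P U = Si M - M S\<close>.\<close>

lemma square_factorization: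
  "mat 1 + (U ** G ** P) ** (U ** G ** P) = (mat 1 - U ** M ** G ** S ** P) ** (mat 1 + U ** Si ** M ** G ** P)"
  by (simp add: matrix_ring_simps relations algebra_simps)

text \<open>
  The forward resolvent: since \<open>(S M)\<^sup>2 = M\<^sup>2 - S P U M\<close>, \<open>Gp =
  G + Gp S P U M G\<close>.
\<close>

lemma forward_shift:
  "U ** Gp ** (S ** P) ** (mat 1 - U ** M ** G ** S ** P) = U ** G ** S ** P"
proof -
  have "(S ** M) ** (S ** M) = M ** M - S ** P ** U ** M"
    by (simp add: matrix_ring_simps relations)
  then have "Gp ** (mat 1 + (M ** M - S ** P ** U ** M)) = mat 1"
    using Gp_left by simp
  then have Gp_G: "Gp ** (mat 1 + M ** M) = mat 1 + Gp ** S ** P ** U ** M"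
    by (simp add: matrix_ring_simps algebra_simps)
  have "Gp = (Gp ** (mat 1 + M ** M)) ** G"
    by (simp add: G_right flip: matrix_mul_assoc)
  then have "Gp = G + Gp ** S ** P ** U ** M ** G"
    unfolding Gp_G by (simp add: matrix_ring_simps)
  then have "U ** Gp ** (S ** P) = U ** (G + Gp ** S ** P ** U ** M ** G) ** (S ** P)"
    by (rule arg_cong[where f = "\<lambda>X. U ** X ** (S ** P)"])
  then have "U ** Gp ** (S ** P) = U ** G ** S ** P + U ** Gp ** (S ** P) ** (U ** M ** G ** S ** P)"
    by (simp add: matrix_ring_simps)
  then show ?thesis by (simp add: matrix_ring_simps algebra_simps)
qed

text \<open>
  The backward resolvent: \<open>Si G S\<close> inverts \<open>I + (Si M)\<^sup>2\<close> up
  to the factor \<open>I + Si M G P U\<close>.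
\<close>

lemma backward_shift:
  "(mat 1 + U ** Si ** M ** G ** P) ** (U ** Gm ** (Si ** P)) = U ** Si ** G ** P"
proof -
  have "Si ** G ** S ** (mat 1 + (Si ** M) ** (Si ** M)) = mat 1 + Si ** M ** G ** P ** U"
    by (simp add: matrix_ring_simps relations algebra_simps)
  then have "Si ** G ** S = (mat 1 + Si ** M ** G ** P ** U) ** Gm"
    using Gm_right by (metis matrix_mul_assoc matrix_mul_rid)
  then have "Si ** G = (mat 1 + Si ** M ** G ** P ** U) ** Gm ** Si"
    using S_Si by (metis matrix_mul_assoc matrix_mul_rid)
  then have "U ** (Si ** G) ** P = U ** ((mat 1 + Si ** M ** G ** P ** U) ** Gm ** Si) ** P"
    by (rule arg_cong[where f = "\<lambda>X. U ** X ** P"])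
  then show ?thesis by (simp add: matrix_ring_simps)
qed

lemma lattice_identity:
  "U ** G ** (S - Si) ** P - U ** G ** (M ** (S - Si) ** M + (S - Si) ** M ** M) ** G ** P =
    (U ** Gp ** (S ** P)) ** (mat 1 + (U ** G ** P) ** (U ** G ** P))
    - (mat 1 + (U ** G ** P) ** (U ** G ** P)) ** (U ** Gm ** (Si ** P))"
proof -
  have "U ** G ** (S - Si) ** P - U ** G ** (M ** (S - Si) ** M + (S - Si) ** M ** M) ** G ** P =
     U ** G ** S ** P ** (mat 1 + U ** Si ** M ** G ** P) - (mat 1 - U ** M ** G ** S ** P) ** (U ** Si ** G ** P)"
    by (simp add: matrix_ring_simps relations algebra_simps)
  also have "\<dots> = (U ** Gp ** (S ** P)) ** (mat 1 + (U ** G ** P) ** (U ** G ** P))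
    - (mat 1 + (U ** G ** P) ** (U ** G ** P)) ** (U ** Gm ** (Si ** P))"
    unfolding square_factorization forward_shift[symmetric] backward_shift[symmetric]
    by (simp add: matrix_mul_assoc)
  finally show ?thesis .
qed

end

theorem mainTheorem16:
  fixes S K :: "complex^'n^'n" and U :: "complex^'n^'m" and V :: "complex^'m^'n"
    and x :: int and t :: real
  assumes "invertible S"
    and "matrix_inv S ** K - K ** S = V ** U"
    and "\<And>y. y \<in> {x - 1, x, x + 1} \<Longrightarrow>
           invertible (mat 1 + (Xi S y t ** K) ** (Xi S y t ** K))"
  shows "((\<lambda>s. calV S U V K x s) has_vector_derivative
           - (calV S U V K (x + 1) t ** (mat 1 + calV S U V K x t ** calV S U V K x t)
              - (mat 1 + calV S U V K x t ** calV S U V K x t) ** calV S U V K (x - 1) t))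
         (at t)"
proof -
  define Si M P where "Si = matrix_inv S" and "M = Xi S x t ** K" and "P = Xi S x t ** V"
  note S_Si = matrix_inv_left_right[OF assms(1), folded Si_def]
  have sylvester: "Si ** M - M ** S = P ** U"
    unfolding Si_def M_def P_def by (rule Xi_shifted_sylvester[OF assms(1,2)])
  have inv: "invertible (mat 1 + M ** M)" "invertible (mat 1 + (S ** M) ** (S ** M))"
      "invertible (mat 1 + (Si ** M) ** (Si ** M))"
    using assms(3)[of x] assms(3)[of "x + 1"] assms(3)[of "x - 1"]
    by (simp_all add: M_def Si_def Xi_succ Xi_pred assms(1) matrix_mul_assoc)
  have "((\<lambda>s. calV S U V K x s) has_vector_derivative
      U ** matrix_inv (mat 1 + M ** M) ** (S - Si) ** P - U ** matrix_inv (mat 1 + M ** M) **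
        (M ** (S - Si) ** M + (S - Si) ** M ** M) ** matrix_inv (mat 1 + M ** M) ** P) (at t)"
    unfolding Si_def M_def P_def by (rule calV_has_vector_derivative[OF assms(1) assms(3)[of x]]) simp
  moreover have "calV S U V K x t = - (U ** matrix_inv (mat 1 + M ** M) ** P)"
    "calV S U V K (x + 1) t = - (U ** matrix_inv (mat 1 + (S ** M) ** (S ** M)) ** (S ** P))"
    "calV S U V K (x - 1) t = - (U ** matrix_inv (mat 1 + (Si ** M) ** (Si ** M)) ** (Si ** P))"
    by (simp_all add: calV_def M_def P_def Si_def Xi_succ Xi_pred assms(1) matrix_mul_assoc)
  ultimately show ?thesis
    unfolding lattice_identity[OF S_Si sylvester matrix_inv_left_right(2,1)[OF inv(1)]
      matrix_inv_left_right(2)[OF inv(2)] matrix_inv_left_right(1)[OF inv(3)]]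
    by (simp add: matrix_neg_left matrix_neg_right)
qed

end
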